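(* Let $G$ be a gate, $v\in V(G)$, and $C_1,C_2$ cliques of $G$ with $C_1\cap C_2=\{v\}$. Let $W=(w_1,\dots,w_t)$ with $t\geq 2$ be a chordless path vertex-disjoint from $G$. Then the graph $G'$ consisting of the union of $G-v$ and $W$, together with all edges between $w_1$ and the vertices of $C_1\setminus\{v\}$ and all edges between $w_t$ and the vertices of $C_2\setminus\{v\}$, is a gate.
   Context: All graphs are finite and simple. A clique is a maximal complete set of vertices. $G-v$ denotes the subgraph induced by $V(G)\setminus\{v\}$. Gates are defined recursively: (i) every chordless cycle $C_n$ with $n\geq 4$ is a gate; (ii) if $H$ is a gate, $C$ and $C'$ are disjoint cliques of $H$, and $P=(v_1,\dots,v_l)$ with $l\geq 2$ is a chordless path vertex-disjoint from $H$, then the union of $H$ and $P$ together with all edges between $v_1$ and the vertices of $C$ and all edges between $v_l$ and the vertices of $C'$ is a gate; (iii) there are no other gates. *)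

theory Defs
  imports Main
begin

definition simple_graph :: "'a set \<Rightarrow> 'a set set \<Rightarrow> bool" where
  "simple_graph V E \<longleftrightarrow> finite V \<and>
     (\<forall>e\<in>E. \<exists>x y. e = {x, y} \<and> x \<noteq> y \<and> x \<in> V \<and> y \<in> V)"

definition complete_set :: "'a set \<Rightarrow> 'a set set \<Rightarrow> 'a set \<Rightarrow> bool" where
  "complete_set V E K \<longleftrightarrow> K \<subseteq> V \<and> (\<forall>x\<in>K. \<forall>y\<in>K. x \<noteq> y \<longrightarrow> {x, y} \<in> E)"

definition clique :: "'a set \<Rightarrow> 'a set set \<Rightarrow> 'a set \<Rightarrow> bool" where
  "clique V E K \<longleftrightarrow> complete_set V E K \<and>
     (\<forall>K'. complete_set V E K' \<and> K \<subseteq> K' \<longrightarrow> K' = K)"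

definition path_edges :: "'a list \<Rightarrow> 'a set set" where
  "path_edges P = {{P ! i, P ! Suc i} | i. Suc i < length P}"

definition del_edges :: "'a set set \<Rightarrow> 'a \<Rightarrow> 'a set set" where
  "del_edges E v = {e \<in> E. v \<notin> e}"

inductive gate :: "'a set \<Rightarrow> 'a set set \<Rightarrow> bool" where
  cycle: "\<lbrakk> n \<ge> 4; bij_betw f {..<n} V;
            E = {{f i, f (Suc i mod n)} | i. i < n} \<rbrakk> \<Longrightarrow> gate V E"
| extend: "\<lbrakk> gate V E; clique V E C; clique V E C'; C \<inter> C' = {};
             length P \<ge> 2; distinct P; set P \<inter> V = {} \<rbrakk> \<Longrightarrow>
           gate (V \<union> set P)
                (E \<union> path_edges P \<union> {{hd P, c} | c. c \<in> C} \<union> {{last P, c} | c. c \<in> C'})"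

end

theory Submission
  imports Defs
begin

text \<open>Induction on the construction of the gate, for all \<open>v\<close>, \<open>C1\<close>, \<open>C2\<close>, \<open>W\<close> at once.
  In a chordless cycle, \<open>v\<close> lies in exactly two cliques, the edges to its two neighbours, and
  replacing \<open>v\<close> by \<open>W\<close> gives a longer chordless cycle.
  Let the gate be obtained from a gate \<open>H\<close> by attaching a path \<open>P\<close> to cliques \<open>C\<close>, \<open>C'\<close> of \<open>H\<close>.
  Its cliques are the cliques of \<open>H\<close> other than \<open>C\<close>, \<open>C'\<close>, the sets \<open>C + hd P\<close>, \<open>C' + last P\<close>, and
  the edges of \<open>P\<close>. If \<open>v\<close> lies on \<open>P\<close>, replacing it by \<open>W\<close> amounts to attaching to \<open>H\<close> the path
  obtained from \<open>P\<close> by substituting \<open>W\<close> for \<open>v\<close>. If \<open>v\<close> lies in \<open>H\<close>, replacement and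
  attachment commute: replace \<open>v\<close> in \<open>H\<close> by induction and attach \<open>P\<close> again, to \<open>C\<close> and \<open>C'\<close>, or to
  \<open>C - v + hd W\<close> and \<open>C'\<close> when \<open>v \<in> C\<close>. In that case one of \<open>C1\<close>, \<open>C2\<close> is \<open>C + hd P\<close>, because in a gate
  every vertex lies in at most two cliques.\<close>

definition star :: "'a \<Rightarrow> 'a set \<Rightarrow> 'a set set" where
  "star x A = {{x, a} | a. a \<in> A}"

definition attach_edges :: "'a set set \<Rightarrow> 'a set \<Rightarrow> 'a set \<Rightarrow> 'a list \<Rightarrow> 'a set set" where
  "attach_edges E C C' P = E \<union> path_edges P \<union> star (hd P) C \<union> star (last P) C'"

definition replace_edges :: "'a set set \<Rightarrow> 'a \<Rightarrow> 'a set \<Rightarrow> 'a set \<Rightarrow> 'a list \<Rightarrow> 'a set set" where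
  "replace_edges E v C1 C2 W = attach_edges (del_edges E v) (C1 - {v}) (C2 - {v}) W"

definition cycle_edges :: "'a list \<Rightarrow> 'a set set" where
  "cycle_edges xs = insert {last xs, hd xs} (path_edges xs)"

section \<open>Edge sets\<close>

lemma star_simps [simp]:
  "star x {} = {}" "star x (insert a A) = insert {x, a} (star x A)"
  by (auto simp: star_def)

lemma path_edges_Nil [simp]: "path_edges [] = {}"
  and path_edges_singleton [simp]: "path_edges [x] = {}"
  by (auto simp: path_edges_def)

lemma path_edges_Cons_Cons [simp]:
  "path_edges (x # y # zs) = insert {x, y} (path_edges (y # zs))"
proof (intro set_eqI iffI)
  fix e assume "e \<in> path_edges (x # y # zs)"
  then obtain i where "Suc i < length (x # y # zs)" "e = {(x # y # zs) ! i, (x # y # zs) ! Suc i}"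
    unfolding path_edges_def by blast
  then show "e \<in> insert {x, y} (path_edges (y # zs))"
    unfolding path_edges_def by (cases i) auto
next
  fix e assume "e \<in> insert {x, y} (path_edges (y # zs))"
  then show "e \<in> path_edges (x # y # zs)"
    unfolding path_edges_def by (auto intro: exI[of _ 0] exI[of _ "Suc _"])
qed

lemma path_edges_Cons:
  "path_edges (x # xs) = (if xs = [] then {} else insert {x, hd xs} (path_edges xs))"
  by (cases xs) auto

lemma path_edges_append:
  "path_edges (xs @ ys) =
     path_edges xs \<union> path_edges ys \<union> (if xs = [] \<or> ys = [] then {} else {{last xs, hd ys}})"
proof (induction xs rule: induct_list012)
  case (3 x y zs)
  then show ?case by auto
qed (cases ys; auto)+

lemma path_edges_rev [simp]: "path_edges (rev xs) = path_edges xs"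
  by (induction xs rule: induct_list012) (auto simp: path_edges_append insert_commute)

lemma path_edges_subset: "e \<in> path_edges xs \<Longrightarrow> e \<subseteq> set xs"
  unfolding path_edges_def by auto

lemma path_edges_nth_iff:
  assumes "distinct xs" "i < length xs" "j < length xs"
  shows "{xs ! i, xs ! j} \<in> path_edges xs \<longleftrightarrow> Suc i = j \<or> Suc j = i"
  using assms by (auto simp: path_edges_def doubleton_eq_iff nth_eq_iff_index_eq)

lemma del_edges_Un [simp]: "del_edges (A \<union> B) v = del_edges A v \<union> del_edges B v"
  by (auto simp: del_edges_def)

lemma del_edges_star [simp]:
  "del_edges (star x A) v = (if x = v then {} else star x (A - {v}))"
  by (auto simp: del_edges_def star_def)

lemma del_edges_path_edges: "v \<notin> set xs \<Longrightarrow> del_edges (path_edges xs) v = path_edges xs"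
  using path_edges_subset unfolding del_edges_def by blast

lemma attach_edges_rev: "attach_edges E C C' (rev P) = attach_edges E C' C P"
  by (auto simp: attach_edges_def hd_rev last_rev)

lemma attach_edges_insert_hd:
  "attach_edges E (insert a C) C' P = insert {hd P, a} (attach_edges E C C' P)"
  by (auto simp: attach_edges_def)

lemma attach_edges_swap:
  "attach_edges (attach_edges E C C' P) D D' W = attach_edges (attach_edges E D D' W) C C' P"
  by (auto simp: attach_edges_def)

lemma del_edges_attach_edges:
  "v \<notin> set P \<Longrightarrow> P \<noteq> [] \<Longrightarrow>
     del_edges (attach_edges E C C' P) v = attach_edges (del_edges E v) (C - {v}) (C' - {v}) P"
  by (auto simp: attach_edges_def del_edges_path_edges)

lemma replace_edges_rev: "replace_edges E v C1 C2 (rev W) = replace_edges E v C2 C1 W"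
  by (simp add: replace_edges_def attach_edges_rev)

lemma attach_edges_replace_middle:
  assumes "v \<notin> set xs" "v \<notin> set ys" "v \<notin> C" "v \<notin> C'" "\<forall>e\<in>E. v \<notin> e" "W \<noteq> []"
  shows "attach_edges (del_edges (attach_edges E C C' (xs @ v # ys)) v)
      (if xs = [] then C else {last xs}) (if ys = [] then C' else {hd ys}) W
    = attach_edges E C C' (xs @ W @ ys)"
proof -
  have "del_edges E v = E" using assms(5) by (auto simp: del_edges_def)
  moreover have "del_edges (path_edges (xs @ v # ys)) v = path_edges xs \<union> path_edges ys"
    using assms(1,2)
    by (auto simp: path_edges_append path_edges_Cons del_edges_def dest: path_edges_subset)
  moreover have "hd (xs @ v # ys) \<noteq> v \<longleftrightarrow> xs \<noteq> []"
    using assms(1) by (cases xs) auto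
  moreover have "last (xs @ v # ys) \<noteq> v \<longleftrightarrow> ys \<noteq> []"
    using assms(2) by (cases ys rule: rev_cases) auto
  ultimately have "del_edges (attach_edges E C C' (xs @ v # ys)) v
      = E \<union> path_edges xs \<union> path_edges ys \<union> (if xs = [] then {} else star (hd xs) C)
        \<union> (if ys = [] then {} else star (last ys) C')"
    using assms(3,4) by (auto simp: attach_edges_def)
  then show ?thesis
    using assms(6)
    by (cases "xs = []"; cases "ys = []")
      (auto simp: attach_edges_def path_edges_append insert_commute)
qed

section \<open>Complete sets and cliques\<close>

lemma complete_set_mono:
  "complete_set V E K \<Longrightarrow> V \<subseteq> V' \<Longrightarrow> E \<subseteq> E' \<Longrightarrow> complete_set V' E' K"
  by (auto simp: complete_set_def)

lemma complete_set_edge: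
  "complete_set V E K \<Longrightarrow> x \<in> K \<Longrightarrow> y \<in> K \<Longrightarrow> x \<noteq> y \<Longrightarrow> {x, y} \<in> E"
  by (simp add: complete_set_def)

lemma clique_subset: "clique V E K \<Longrightarrow> K \<subseteq> V"
  by (simp add: clique_def complete_set_def)

lemma clique_edge: "clique V E K \<Longrightarrow> x \<in> K \<Longrightarrow> y \<in> K \<Longrightarrow> x \<noteq> y \<Longrightarrow> {x, y} \<in> E"
  by (simp add: clique_def complete_set_def)

lemma clique_maximal: "clique V E K \<Longrightarrow> complete_set V E K' \<Longrightarrow> K \<subseteq> K' \<Longrightarrow> K' = K"
  by (simp add: clique_def)

lemma clique_nonempty: "clique V E K \<Longrightarrow> V \<noteq> {} \<Longrightarrow> K \<noteq> {}"
  using clique_maximal[of V E K "{_}"] by (force simp: complete_set_def)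

lemma clique_del_edges:
  assumes "clique V E K" "v \<notin> K"
  shows "clique (V - {v}) (del_edges E v) K"
  using assms complete_set_mono[of "V - {v}" "del_edges E v" _ V E]
  by (auto simp: clique_def complete_set_def del_edges_def)

lemma complete_set_del_edges:
  "complete_set V E K \<Longrightarrow> complete_set (V - {v}) (del_edges E v) (K - {v})"
  by (auto simp: complete_set_def del_edges_def)

lemma simple_graph_del_edges:
  assumes "simple_graph V E"
  shows "simple_graph (V - {v}) (del_edges E v)"
  unfolding simple_graph_def
proof (intro conjI ballI)
  show "finite (V - {v})" using assms by (simp add: simple_graph_def)
  fix e assume "e \<in> del_edges E v"
  then have "e \<in> E" "v \<notin> e" by (simp_all add: del_edges_def)
  then show "\<exists>x y. e = {x, y} \<and> x \<noteq> y \<and> x \<in> V - {v} \<and> y \<in> V - {v}"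
    using assms unfolding simple_graph_def by blast
qed

section \<open>Chordless cycles\<close>

lemma simple_graph_cycle_edges:
  assumes "distinct xs" "2 \<le> length xs"
  shows "simple_graph (set xs) (cycle_edges xs)"
  unfolding simple_graph_def
proof (intro conjI ballI)
  fix e assume "e \<in> cycle_edges xs"
  then consider "e = {last xs, hd xs}" | j where "Suc j < length xs" "e = {xs ! j, xs ! Suc j}"
    unfolding cycle_edges_def path_edges_def by blast
  then show "\<exists>x y. e = {x, y} \<and> x \<noteq> y \<and> x \<in> set xs \<and> y \<in> set xs"
  proof cases
    case 1
    have "xs \<noteq> []" "0 \<noteq> length xs - 1" using assms(2) by auto
    then have "last xs \<noteq> hd xs"
      using nth_eq_iff_index_eq[OF assms(1), of 0 "length xs - 1"] by (simp add: hd_conv_nth last_conv_nth)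
    then show ?thesis using 1 last_in_set[OF \<open>xs \<noteq> []\<close>] hd_in_set[OF \<open>xs \<noteq> []\<close>] by blast
  next
    case 2
    then show ?thesis
      using nth_eq_iff_index_eq[OF assms(1), of j "Suc j"]
      by (intro exI[of _ "xs ! j"] exI[of _ "xs ! Suc j"]) auto
  qed
qed simp

lemma cycle_edges_conv_nth:
  assumes "xs \<noteq> []"
  shows "cycle_edges xs = {{xs ! i, xs ! (Suc i mod length xs)} | i. i < length xs}"
proof -
  define n where "n = length xs"
  have n: "0 < n" using assms by (simp add: n_def)
  have "{{xs ! i, xs ! (Suc i mod n)} | i. i < n} = (\<lambda>i. {xs ! i, xs ! (Suc i mod n)}) ` {..<n}"
    by auto
  also have "{..<n} = insert (n - 1) {..<n - 1}" using n by auto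
  also have "(\<lambda>i. {xs ! i, xs ! (Suc i mod n)}) ` insert (n - 1) {..<n - 1}
      = insert {xs ! (n - 1), xs ! 0} ((\<lambda>i. {xs ! i, xs ! (Suc i mod n)}) ` {..<n - 1})"
    using n by simp
  also have "\<dots> = insert {xs ! (n - 1), xs ! 0} ((\<lambda>i. {xs ! i, xs ! Suc i}) ` {..<n - 1})"
    by (intro arg_cong[where f = "insert _"] image_cong) auto
  also have "\<dots> = cycle_edges xs"
    using assms by (auto simp: cycle_edges_def path_edges_def hd_conv_nth last_conv_nth n_def)
  finally show ?thesis by (simp add: n_def)
qed

lemma cycle_edges_append_swap: "cycle_edges (xs @ ys) = cycle_edges (ys @ xs)"
proof (cases "xs = [] \<or> ys = []")
  case False
  then show ?thesis
    by (simp add: cycle_edges_def path_edges_append insert_commute Un_ac)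
qed auto

lemma cycle_edges_snoc:
  "ys \<noteq> [] \<Longrightarrow> cycle_edges (ys @ [v]) = insert {v, hd ys} (insert {last ys, v} (path_edges ys))"
  by (simp add: cycle_edges_def path_edges_append)

lemma cycle_edges_rotate_to_last:
  assumes "distinct xs" "v \<in> set xs"
  obtains ys where "distinct (ys @ [v])" "length (ys @ [v]) = length xs" "set (ys @ [v]) = set xs"
    "cycle_edges (ys @ [v]) = cycle_edges xs"
proof -
  obtain as bs where xs: "xs = as @ v # bs" using split_list[OF assms(2)] by blast
  show ?thesis
  proof
    show "cycle_edges ((bs @ as) @ [v]) = cycle_edges xs"
      using xs cycle_edges_append_swap[of "as @ [v]" bs] by simp
  qed (use assms(1) xs in auto)
qed

lemma gate_cycle_edges:
  assumes "distinct xs" "4 \<le> length xs"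
  shows "gate (set xs) (cycle_edges xs)"
proof (rule gate.cycle)
  show "bij_betw ((!) xs) {..<length xs} (set xs)"
    using assms(1) by (simp add: bij_betw_nth lessThan_atLeast0)
  show "cycle_edges xs = {{xs ! i, xs ! (Suc i mod length xs)} | i. i < length xs}"
    using assms(2) by (intro cycle_edges_conv_nth) auto
qed (use assms in simp)

lemma cycle_edges_of_bij:
  assumes "4 \<le> n" "bij_betw f {..<n} V"
  obtains xs where "distinct xs" "length xs = n" "set xs = V"
    "{{f i, f (Suc i mod n)} | i. i < n} = cycle_edges xs"
proof
  let ?xs = "map f [0..<n]"
  show "distinct ?xs" "set ?xs = V"
    using assms(2) by (auto simp: bij_betw_def distinct_map atLeast0LessThan)
  show "length ?xs = n" by simp
  have "(\<lambda>i. {?xs ! i, ?xs ! (Suc i mod n)}) ` {..<n} = (\<lambda>i. {f i, f (Suc i mod n)}) ` {..<n}"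
    by (rule image_cong) (use assms(1) in auto)
  then show "{{f i, f (Suc i mod n)} | i. i < n} = cycle_edges ?xs"
    using assms(1) by (subst cycle_edges_conv_nth) (auto simp: setcompr_eq_image lessThan_def)
qed

lemma cycle_clique_through_last:
  assumes "distinct (ys @ [v])" "3 \<le> length ys"
    and "clique (set (ys @ [v])) (cycle_edges (ys @ [v])) K" "v \<in> K"
  shows "K = {last ys, v} \<or> K = {v, hd ys}"
proof -
  let ?V = "set (ys @ [v])" and ?E = "cycle_edges (ys @ [v])"
  have ys: "ys \<noteq> []" "v \<notin> set ys" "distinct ys" using assms(1,2) by auto
  have ends: "hd ys = ys ! 0" "last ys = ys ! (length ys - 1)"
    using ys(1) by (simp_all add: hd_conv_nth last_conv_nth)
  have bounds: "0 < length ys" "length ys - 1 < length ys" "0 \<noteq> length ys - 1"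
    using assms(2) by auto
  have hd_last: "hd ys \<noteq> last ys" "{hd ys, last ys} \<notin> path_edges ys"
    using assms(2) bounds by (simp_all add: ends nth_eq_iff_index_eq[OF ys(3)] path_edges_nth_iff[OF ys(3)])
  have nbr: "u = last ys \<or> u = hd ys" if "u \<in> K" "u \<noteq> v" for u
  proof -
    have "{v, u} \<in> ?E" using clique_edge[OF assms(3,4) that(1)] that(2) by simp
    then show ?thesis
      using ys(1,2) by (auto simp: cycle_edges_snoc doubleton_eq_iff dest: path_edges_subset)
  qed
  have not_both: "\<not> (hd ys \<in> K \<and> last ys \<in> K)"
  proof
    assume "hd ys \<in> K \<and> last ys \<in> K"
    then have "{hd ys, last ys} \<in> ?E" using clique_edge[OF assms(3)] hd_last(1) by blast
    then show False using hd_last ys by (auto simp: cycle_edges_snoc doubleton_eq_iff)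
  qed
  have complete: "complete_set ?V ?E {last ys, v}" "complete_set ?V ?E {v, hd ys}"
    using ys by (auto simp: complete_set_def cycle_edges_snoc insert_commute)
  show ?thesis
  proof (cases "hd ys \<in> K")
    case True
    then have "K \<subseteq> {v, hd ys}" using nbr not_both by blast
    then show ?thesis using clique_maximal[OF assms(3) complete(2)] assms(4) True by blast
  next
    case False
    then have "K \<subseteq> {last ys, v}" using nbr by blast
    then show ?thesis using clique_maximal[OF assms(3) complete(1)] assms(4) by blast
  qed
qed

section \<open>Attaching a path\<close>

text \<open>\<open>C\<close> and \<open>C'\<close> need only be complete, not maximal, so that \<open>replace_edges\<close> is an instance:
  see \<open>path_attachment_replacement\<close>.\<close>

locale path_attachment =
  fixes V :: "'a set" and E :: "'a set set" and C C' :: "'a set" and P :: "'a list"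
  assumes graph: "simple_graph V E"
    and complete_C: "complete_set V E C" and complete_C': "complete_set V E C'"
    and disjoint: "C \<inter> C' = {}"
    and length_P: "2 \<le> length P" and distinct_P: "distinct P" and P_disjoint: "set P \<inter> V = {}"
begin

lemma reversed: "path_attachment V E C' C (rev P)"
  using graph complete_C complete_C' disjoint length_P distinct_P P_disjoint
  by (unfold_locales) auto

lemma C_subset: "C \<subseteq> V" "C' \<subseteq> V"
  using complete_C complete_C' by (auto simp: complete_set_def)

lemma edge_vertices: "{x, y} \<in> E \<Longrightarrow> x \<in> V \<and> y \<in> V"
  using graph by (fastforce simp: simple_graph_def doubleton_eq_iff)

lemma P_nonempty: "P \<noteq> []"
  using length_P by auto

lemma hd_P: "hd P = P ! 0" and last_P: "last P = P ! (length P - 1)"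
  using P_nonempty by (simp_all add: hd_conv_nth last_conv_nth)

lemma nth_P_notin: "i < length P \<Longrightarrow> P ! i \<notin> V"
  using P_disjoint nth_mem by blast

lemma nth_P_eq_iff: "i < length P \<Longrightarrow> j < length P \<Longrightarrow> P ! i = P ! j \<longleftrightarrow> i = j"
  using distinct_P by (simp add: nth_eq_iff_index_eq)

lemma hd_last_P_notin: "hd P \<notin> V" "last P \<notin> V"
  using P_disjoint hd_in_set[OF P_nonempty] last_in_set[OF P_nonempty] by blast+

lemma subset_attach_edges: "E \<subseteq> attach_edges E C C' P"
  by (auto simp: attach_edges_def)

lemma simple_graph_attach_edges: "simple_graph (V \<union> set P) (attach_edges E C C' P)"
  unfolding simple_graph_def
proof (intro conjI ballI)
  show "finite (V \<union> set P)" using graph by (simp add: simple_graph_def)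
  fix e assume "e \<in> attach_edges E C C' P"
  then consider "e \<in> E" | "e \<in> path_edges P" | "e \<in> star (hd P) C" | "e \<in> star (last P) C'"
    unfolding attach_edges_def by blast
  then show "\<exists>x y. e = {x, y} \<and> x \<noteq> y \<and> x \<in> V \<union> set P \<and> y \<in> V \<union> set P"
  proof cases
    case 1 then show ?thesis using graph unfolding simple_graph_def by blast
  next
    case 2 then show ?thesis by (force simp: path_edges_def nth_P_eq_iff)
  next
    case 3 then show ?thesis using C_subset P_disjoint P_nonempty by (force simp: star_def)
  next
    case 4 then show ?thesis using C_subset P_disjoint P_nonempty by (force simp: star_def)
  qed
qed

definition left_neighbours :: "nat \<Rightarrow> 'a set" where
  "left_neighbours i = (if i = 0 then C else {P ! (i - 1)})"

definition right_neighbours :: "nat \<Rightarrow> 'a set" where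
  "right_neighbours i = (if Suc i = length P then C' else {P ! Suc i})"

lemma path_edge_nth: "Suc i < length P \<Longrightarrow> {P ! i, P ! Suc i} \<in> attach_edges E C C' P"
  by (auto simp: attach_edges_def path_edges_def)

lemma path_vertex_edgeD:
  assumes i: "i < length P" and e: "{P ! i, u} \<in> attach_edges E C C' P"
  shows "u \<in> left_neighbours i \<union> right_neighbours i"
proof -
  have notV: "P ! i \<notin> V" using nth_P_notin i by blast
  consider "{P ! i, u} \<in> E" | "{P ! i, u} \<in> path_edges P" | "{P ! i, u} \<in> star (hd P) C"
    | "{P ! i, u} \<in> star (last P) C'" using e unfolding attach_edges_def by blast
  then show ?thesis
  proof cases
    case 1 then show ?thesis using edge_vertices notV by blast
  next
    case 2
    then obtain j where j: "Suc j < length P" "{P ! i, u} = {P ! j, P ! Suc j}"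
      unfolding path_edges_def by blast
    then consider "P ! i = P ! j" "u = P ! Suc j" | "P ! i = P ! Suc j" "u = P ! j"
      by (auto simp: doubleton_eq_iff)
    then show ?thesis
      using i j(1) by cases (auto simp: nth_P_eq_iff left_neighbours_def right_neighbours_def)
  next
    case 3
    then obtain c where "c \<in> C" "{P ! i, u} = {hd P, c}" unfolding star_def by blast
    then show ?thesis
      using C_subset notV i P_nonempty nth_P_eq_iff[of i 0]
      by (auto simp: doubleton_eq_iff hd_P left_neighbours_def)
  next
    case 4
    then obtain c where "c \<in> C'" "{P ! i, u} = {last P, c}" unfolding star_def by blast
    then show ?thesis
      using C_subset notV i length_P nth_P_eq_iff[of i "length P - 1"]
      by (auto simp: doubleton_eq_iff last_P right_neighbours_def)
  qed
qed

lemma neighbour_edge: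
  assumes i: "i < length P" and u: "u \<in> left_neighbours i \<union> right_neighbours i"
  shows "{P ! i, u} \<in> attach_edges E C C' P"
proof -
  consider "i = 0" "u \<in> C" | "0 < i" "u = P ! (i - 1)"
    | "Suc i = length P" "u \<in> C'" | "Suc i < length P" "u = P ! Suc i"
    using i u by (auto simp: left_neighbours_def right_neighbours_def split: if_splits)
  then show ?thesis
  proof cases
    case 1
    then show ?thesis by (auto simp: attach_edges_def star_def hd_P)
  next
    case 2
    then show ?thesis using path_edge_nth[of "i - 1"] i by (simp add: insert_commute)
  next
    case 3
    then have "last P = P ! i" by (simp add: last_P 3(1)[symmetric])
    then show ?thesis using 3 by (auto simp: attach_edges_def star_def)
  qed (simp add: path_edge_nth)
qed

lemma path_vertex_edge_iff:
  "i < length P \<Longrightarrow> {P ! i, u} \<in> attach_edges E C C' P \<longleftrightarrow> u \<in> left_neighbours i \<union> right_neighbours i"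
  using path_vertex_edgeD neighbour_edge by blast

lemma graph_vertex_edgeD:
  assumes x: "x \<in> V" and e: "{x, u} \<in> attach_edges E C C' P"
  shows "({x, u} \<in> E \<and> u \<in> V) \<or> (x \<in> C \<and> u = hd P) \<or> (x \<in> C' \<and> u = last P)"
proof -
  have "x \<notin> set P" "hd P \<in> set P" "last P \<in> set P" using x P_disjoint P_nonempty by auto
  then show ?thesis
    using e edge_vertices
    by (auto simp: attach_edges_def star_def doubleton_eq_iff dest: path_edges_subset)
qed

lemma left_right_neighbours_nonadjacent:
  assumes i: "i < length P" and u: "u \<in> left_neighbours i" and w: "w \<in> right_neighbours i"
  shows "u \<noteq> w \<and> {u, w} \<notin> attach_edges E C C' P"
proof (cases "i = 0")
  case True
  then have "u \<in> C" "u \<in> V" "w \<notin> C" "w \<noteq> hd P"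
    using u w length_P P_nonempty disjoint C_subset nth_P_notin[of 1] nth_P_eq_iff[of 0 1]
    by (auto simp: left_neighbours_def right_neighbours_def hd_P)
  moreover have "w \<notin> V" using True w length_P nth_P_notin[of 1]
    by (auto simp: right_neighbours_def)
  ultimately show ?thesis
    using graph_vertex_edgeD[of u w] disjoint by auto
next
  case False
  then have u: "u = P ! (i - 1)" and i': "i - 1 < length P" "Suc (i - 1) = i"
    using u i by (auto simp: left_neighbours_def)
  have u_notV: "u \<notin> V" using nth_P_notin[OF i'(1)] u by simp
  have "w \<notin> left_neighbours (i - 1) \<union> right_neighbours (i - 1) \<and> u \<noteq> w"
  proof (cases "Suc i = length P")
    case True
    moreover have "P ! (i - 1 - 1) \<notin> V" "P ! i \<notin> V" using i nth_P_notin by simp_all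
    ultimately have "w \<in> C'" "w \<in> V" "w \<noteq> P ! (i - 1 - 1)" "w \<noteq> P ! i"
      using w C_subset by (auto simp: right_neighbours_def)
    then show ?thesis
      using disjoint i i' u_notV
      by (auto simp: left_neighbours_def right_neighbours_def)
  next
    case False
    then have w': "w = P ! Suc i" "Suc i < length P" using w i by (auto simp: right_neighbours_def)
    then have "P ! Suc i \<noteq> P ! i" "P ! Suc i \<noteq> P ! (i - 1 - 1)" "P ! Suc i \<noteq> P ! (i - 1)"
      "P ! Suc i \<notin> V"
      using nth_P_eq_iff[of "Suc i"] nth_P_notin by auto
    then show ?thesis
      using False i' u w' C_subset by (auto simp: left_neighbours_def right_neighbours_def)
  qed
  then show ?thesis using path_vertex_edge_iff[OF i'(1)] u by auto
qed

lemma complete_through_path_vertex: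
  assumes i: "i < length P" and K: "complete_set (V \<union> set P) (attach_edges E C C' P) K"
    and p: "P ! i \<in> K"
  shows "K \<subseteq> insert (P ! i) (left_neighbours i) \<or> K \<subseteq> insert (P ! i) (right_neighbours i)"
proof -
  have "u \<in> left_neighbours i \<union> right_neighbours i" if "u \<in> K" "u \<noteq> P ! i" for u
    using path_vertex_edge_iff[OF i] complete_set_edge[OF K p that(1)] that(2) by simp
  moreover have "\<not> (u \<in> left_neighbours i \<and> w \<in> right_neighbours i)" if "u \<in> K" "w \<in> K" for u w
    using left_right_neighbours_nonadjacent[OF i, of u w] complete_set_edge[OF K that] by blast
  ultimately show ?thesis by blast
qed

lemma not_self_neighbour: "i < length P \<Longrightarrow> P ! i \<notin> left_neighbours i \<union> right_neighbours i"
  using path_vertex_edge_iff[of i "P ! i"] simple_graph_attach_edges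
  by (auto simp: simple_graph_def)

lemma left_neighbour_in_graph:
  "i < length P \<Longrightarrow> x \<in> left_neighbours i \<Longrightarrow> x \<in> V \<Longrightarrow> i = 0 \<and> x \<in> C"
  using nth_P_notin[of "i - 1"] by (auto simp: left_neighbours_def split: if_splits)

lemma right_neighbour_in_graph:
  "i < length P \<Longrightarrow> x \<in> right_neighbours i \<Longrightarrow> x \<in> V \<Longrightarrow> Suc i = length P \<and> x \<in> C'"
  using nth_P_notin[of "Suc i"] by (auto simp: right_neighbours_def split: if_splits)

lemma complete_insert_left_neighbours:
  assumes i: "i < length P"
  shows "complete_set (V \<union> set P) (attach_edges E C C' P) (insert (P ! i) (left_neighbours i))"
proof -
  have "complete_set (V \<union> set P) (attach_edges E C C' P) (left_neighbours i)"
    using complete_set_mono[OF complete_C _ subset_attach_edges] i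
    by (auto simp: left_neighbours_def complete_set_def)
  then show ?thesis
    using path_vertex_edge_iff[OF i] i by (auto simp: complete_set_def insert_commute)
qed

lemma complete_insert_right_neighbours:
  assumes i: "i < length P"
  shows "complete_set (V \<union> set P) (attach_edges E C C' P) (insert (P ! i) (right_neighbours i))"
proof -
  have "complete_set (V \<union> set P) (attach_edges E C C' P) (right_neighbours i)"
    using complete_set_mono[OF complete_C' _ subset_attach_edges] i
    by (auto simp: right_neighbours_def complete_set_def)
  then show ?thesis
    using path_vertex_edge_iff[OF i] i by (auto simp: complete_set_def insert_commute)
qed

lemma clique_through_path_vertex:
  assumes "i < length P" "clique (V \<union> set P) (attach_edges E C C' P) K" "P ! i \<in> K"
  shows "K = insert (P ! i) (left_neighbours i) \<or> K = insert (P ! i) (right_neighbours i)"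
  using complete_through_path_vertex[OF assms(1) _ assms(3)] assms(2)
    clique_maximal[OF assms(2) complete_insert_left_neighbours[OF assms(1)]]
    clique_maximal[OF assms(2) complete_insert_right_neighbours[OF assms(1)]]
  by (auto simp: clique_def)

lemma clique_insert_left_neighbours:
  assumes i: "i < length P" and ne: "left_neighbours i \<noteq> {}"
  shows "clique (V \<union> set P) (attach_edges E C C' P) (insert (P ! i) (left_neighbours i))"
  unfolding clique_def
proof (intro conjI allI impI complete_insert_left_neighbours[OF i], elim conjE)
  fix K assume K: "complete_set (V \<union> set P) (attach_edges E C C' P) K"
    and sub: "insert (P ! i) (left_neighbours i) \<subseteq> K"
  obtain u where u: "u \<in> left_neighbours i" using ne by blast
  have "u \<notin> insert (P ! i) (right_neighbours i)"
    using not_self_neighbour[OF i] left_right_neighbours_nonadjacent[OF i u] u by blast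
  then have "K \<subseteq> insert (P ! i) (left_neighbours i)"
    using complete_through_path_vertex[OF i K] sub u by blast
  then show "K = insert (P ! i) (left_neighbours i)" using sub by blast
qed

lemma clique_insert_hd: "C \<noteq> {} \<Longrightarrow> clique (V \<union> set P) (attach_edges E C C' P) (insert (hd P) C)"
  using clique_insert_left_neighbours[of 0] P_nonempty by (simp add: left_neighbours_def hd_P)

lemma complete_insert_hd: "complete_set (V \<union> set P) (attach_edges E C C' P) (insert (hd P) C)"
  using complete_insert_left_neighbours[of 0] P_nonempty by (simp add: left_neighbours_def hd_P)

lemma complete_insert_last: "complete_set (V \<union> set P) (attach_edges E C C' P) (insert (last P) C')"
  using complete_insert_right_neighbours[of "length P - 1"] P_nonempty
  by (simp add: right_neighbours_def last_P)

lemma clique_attach_edges: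
  assumes K: "clique V E K" and not_sub: "\<not> K \<subseteq> C" "\<not> K \<subseteq> C'"
  shows "clique (V \<union> set P) (attach_edges E C C' P) K"
  unfolding clique_def
proof (intro conjI allI impI)
  show "complete_set (V \<union> set P) (attach_edges E C C' P) K"
    using complete_set_mono[of V E K, OF _ Un_upper1 subset_attach_edges] K by (simp add: clique_def)
  fix K' assume "complete_set (V \<union> set P) (attach_edges E C C' P) K' \<and> K \<subseteq> K'"
  then have K': "complete_set (V \<union> set P) (attach_edges E C C' P) K'" and sub: "K \<subseteq> K'"
    by blast+
  have KV: "K \<subseteq> V" using clique_subset[OF K] .
  have "K' \<inter> set P = {}"
  proof (rule ccontr)
    assume "K' \<inter> set P \<noteq> {}"
    then obtain i where i: "i < length P" "P ! i \<in> K'" by (auto simp: in_set_conv_nth)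
    have "K \<subseteq> left_neighbours i \<or> K \<subseteq> right_neighbours i"
      using complete_through_path_vertex[OF i(1) K' i(2)] sub KV nth_P_notin[OF i(1)] by blast
    then show False
      using left_neighbour_in_graph[OF i(1)] right_neighbour_in_graph[OF i(1)] KV not_sub by blast
  qed
  then have "K' \<subseteq> V" using K' by (auto simp: complete_set_def)
  moreover have "{x, y} \<in> E" if "x \<in> K'" "y \<in> K'" "x \<noteq> y" for x y
    using graph_vertex_edgeD[of x y] complete_set_edge[OF K' that] that \<open>K' \<subseteq> V\<close> hd_last_P_notin
    by blast
  ultimately have "complete_set V E K'" by (simp add: complete_set_def)
  then show "K' = K" using clique_maximal[OF K _ sub] by blast
qed

lemma clique_avoiding_path:
  assumes K: "clique (V \<union> set P) (attach_edges E C C' P) K" and d: "K \<inter> set P = {}"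
  shows "clique V E K \<and> K \<noteq> C \<and> K \<noteq> C'"
proof (intro conjI)
  have KV: "K \<subseteq> V" using clique_subset[OF K] d by blast
  have "{x, y} \<in> E" if "x \<in> K" "y \<in> K" "x \<noteq> y" for x y
  proof -
    have "x \<in> V" "y \<in> V" using that KV by auto
    then show ?thesis
      using graph_vertex_edgeD[OF \<open>x \<in> V\<close> clique_edge[OF K that]] hd_last_P_notin by auto
  qed
  then have complete: "complete_set V E K" using KV by (simp add: complete_set_def)
  show "clique V E K"
    unfolding clique_def
  proof (intro conjI allI impI complete)
    fix K' assume K': "complete_set V E K' \<and> K \<subseteq> K'"
    then have "complete_set (V \<union> set P) (attach_edges E C C' P) K'"
      using complete_set_mono[OF _ Un_upper1 subset_attach_edges] by blast
    then show "K' = K" using clique_maximal[OF K] K' by blast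
  qed
  show "K \<noteq> C"
    using clique_maximal[OF K complete_insert_hd] hd_last_P_notin C_subset by auto
  show "K \<noteq> C'"
    using clique_maximal[OF K complete_insert_last] hd_last_P_notin C_subset by auto
qed

lemma clique_through_graph_vertex:
  assumes K: "clique (V \<union> set P) (attach_edges E C C' P) K" and x: "x \<in> V" "x \<in> K"
  shows "K \<inter> set P = {} \<or> (x \<in> C \<and> K = insert (hd P) C) \<or> (x \<in> C' \<and> K = insert (last P) C')"
proof (cases "K \<inter> set P = {}")
  case False
  then obtain i where i: "i < length P" "P ! i \<in> K" by (auto simp: in_set_conv_nth)
  have "x \<noteq> P ! i" using x(1) nth_P_notin[OF i(1)] by blast
  then consider "K = insert (P ! i) (left_neighbours i)" "x \<in> left_neighbours i"
    | "K = insert (P ! i) (right_neighbours i)" "x \<in> right_neighbours i"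
    using clique_through_path_vertex[OF i(1) K i(2)] x(2) by blast
  then show ?thesis
  proof cases
    case 1
    then have "i = 0" "x \<in> C" using left_neighbour_in_graph[OF i(1) _ x(1)] by auto
    then show ?thesis using 1(1) by (simp add: left_neighbours_def hd_P)
  next
    case 2
    then have i': "Suc i = length P" "x \<in> C'" using right_neighbour_in_graph[OF i(1) _ x(1)] by auto
    then have "last P = P ! i" using last_P by (metis diff_Suc_1)
    then show ?thesis using 2(1) i' by (simp add: right_neighbours_def)
  qed
qed simp

end

lemma path_attachment_replacement:
  assumes "simple_graph V E" "clique V E C1" "clique V E C2" "C1 \<inter> C2 = {v}"
    and "2 \<le> length W" "distinct W" "set W \<inter> V = {}"
  shows "path_attachment (V - {v}) (del_edges E v) (C1 - {v}) (C2 - {v}) W"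
proof
  show "complete_set (V - {v}) (del_edges E v) (C1 - {v})" "complete_set (V - {v}) (del_edges E v) (C2 - {v})"
    using assms(2,3) by (simp_all add: clique_def complete_set_del_edges)
qed (use assms simple_graph_del_edges in auto)

lemma clique_replace_edges:
  assumes "simple_graph V E" "clique V E C1" "clique V E C2" "C1 \<inter> C2 = {v}"
    and "2 \<le> length W" "distinct W" "set W \<inter> V = {}"
    and K: "clique V E K" "v \<notin> K"
  shows "clique (V - {v} \<union> set W) (replace_edges E v C1 C2 W) K"
proof -
  interpret path_attachment "V - {v}" "del_edges E v" "C1 - {v}" "C2 - {v}" W
    using path_attachment_replacement assms(1-7) .
  have "\<not> K \<subseteq> C1 - {v}" "\<not> K \<subseteq> C2 - {v}"
    using clique_maximal[OF K(1), of C1] clique_maximal[OF K(1), of C2] assms(2-4) K(2)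
    by (auto simp: clique_def)
  then show ?thesis
    unfolding replace_edges_def using clique_attach_edges clique_del_edges[OF K] by blast
qed

section \<open>Invariants of gates\<close>

lemma gate_simple_graph: "gate V E \<Longrightarrow> simple_graph V E"
proof (induction rule: gate.induct)
  case (cycle n f V E)
  obtain xs where "distinct xs" "length xs = n" "set xs = V"
    "{{f i, f (Suc i mod n)} | i. i < n} = cycle_edges xs"
    by (rule cycle_edges_of_bij[OF cycle.hyps(1,2)])
  then show ?case using cycle.hyps(1,3) simple_graph_cycle_edges[of xs] by simp
next
  case (extend V E C C' P)
  interpret path_attachment V E C C' P
    using extend by unfold_locales (simp_all add: clique_def)
  show ?case using simple_graph_attach_edges by (simp add: attach_edges_def star_def)
qed

lemma gate_nonempty: "gate V E \<Longrightarrow> V \<noteq> {}"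
proof (induction rule: gate.induct)
  case (cycle n f V E)
  then show ?case using bij_betw_apply[OF cycle.hyps(2), of 0] by auto
qed simp

lemma gate_attach_edges:
  "gate V E \<Longrightarrow> clique V E C \<Longrightarrow> clique V E C' \<Longrightarrow> C \<inter> C' = {} \<Longrightarrow> 2 \<le> length P \<Longrightarrow>
    distinct P \<Longrightarrow> set P \<inter> V = {} \<Longrightarrow> gate (V \<union> set P) (attach_edges E C C' P)"
  unfolding attach_edges_def star_def by (rule gate.extend)

locale gate_extension = path_attachment +
  assumes gate: "gate V E" and clique_C: "clique V E C" and clique_C': "clique V E C'"
begin

lemma reversed: "gate_extension V E C' C (rev P)"
  using path_attachment.reversed gate clique_C clique_C' path_attachment_axioms
  by (simp add: gate_extension_def gate_extension_axioms_def)

lemma C_nonempty: "C \<noteq> {}" "C' \<noteq> {}"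
  using clique_nonempty[OF clique_C] clique_nonempty[OF clique_C'] gate_nonempty[OF gate] by auto

lemma neighbours_nonempty: "left_neighbours i \<noteq> {}" "right_neighbours i \<noteq> {}"
  using C_nonempty by (simp_all add: left_neighbours_def right_neighbours_def)

lemma clique_restrict_cases:
  assumes K: "clique (V \<union> set P) (attach_edges E C C' P) K" and x: "x \<in> V" "x \<in> K"
  obtains "K - set P = K" "clique V E K" "K \<noteq> C" "K \<noteq> C'"
    | "K - set P = C" "K = insert (hd P) C"
    | "K - set P = C'" "K = insert (last P) C'"
proof -
  have "insert (hd P) C - set P = C" "insert (last P) C' - set P = C'"
    using P_nonempty P_disjoint C_subset by auto
  then show ?thesis
    using clique_through_graph_vertex[OF K x] clique_avoiding_path[OF K] that by blast
qed

lemma clique_restrict: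
  assumes K: "clique (V \<union> set P) (attach_edges E C C' P) K" and x: "x \<in> V" "x \<in> K"
  shows "clique V E (K - set P)" "x \<in> K - set P"
proof -
  show "clique V E (K - set P)"
    by (rule clique_restrict_cases[OF K x]) (simp_all add: clique_C clique_C')
  show "x \<in> K - set P" using x P_disjoint by blast
qed

lemma clique_restrict_inj:
  assumes K: "clique (V \<union> set P) (attach_edges E C C' P) K"
    and K': "clique (V \<union> set P) (attach_edges E C C' P) K'"
    and x: "x \<in> V" "x \<in> K" "x \<in> K'" and eq: "K - set P = K' - set P"
  shows "K = K'"
proof -
  have "C \<noteq> C'" using C_nonempty disjoint by auto
  then show ?thesis
    using clique_restrict_cases[OF K x(1,2)] clique_restrict_cases[OF K' x(1,3)] eq by metis
qed

lemma at_most_two_cliques: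
  assumes IH: "\<And>x K1 K2 K3. clique V E K1 \<Longrightarrow> clique V E K2 \<Longrightarrow> clique V E K3 \<Longrightarrow>
      x \<in> K1 \<Longrightarrow> x \<in> K2 \<Longrightarrow> x \<in> K3 \<Longrightarrow> K1 = K2 \<or> K1 = K3 \<or> K2 = K3"
    and K: "clique (V \<union> set P) (attach_edges E C C' P) K1"
      "clique (V \<union> set P) (attach_edges E C C' P) K2"
      "clique (V \<union> set P) (attach_edges E C C' P) K3"
    and x: "x \<in> K1" "x \<in> K2" "x \<in> K3"
  shows "K1 = K2 \<or> K1 = K3 \<or> K2 = K3"
proof (cases "x \<in> V")
  case True
  then show ?thesis
    using IH[OF clique_restrict(1)[OF K(1) True x(1)] clique_restrict(1)[OF K(2) True x(2)]
        clique_restrict(1)[OF K(3) True x(3)] clique_restrict(2)[OF K(1) True x(1)]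
        clique_restrict(2)[OF K(2) True x(2)] clique_restrict(2)[OF K(3) True x(3)]]
      clique_restrict_inj[OF K(1) K(2) True x(1,2)] clique_restrict_inj[OF K(1) K(3) True x(1,3)]
      clique_restrict_inj[OF K(2) K(3) True x(2,3)] x
    by blast
next
  case False
  then have "x \<in> set P" using clique_subset[OF K(1)] x(1) by blast
  then obtain i where i: "i < length P" "x = P ! i" by (metis in_set_conv_nth)
  then show ?thesis using clique_through_path_vertex[OF i(1)] K x by blast
qed

end

lemma gate_extensionI:
  "gate V E \<Longrightarrow> clique V E C \<Longrightarrow> clique V E C' \<Longrightarrow> C \<inter> C' = {} \<Longrightarrow> 2 \<le> length P \<Longrightarrow>
    distinct P \<Longrightarrow> set P \<inter> V = {} \<Longrightarrow> gate_extension V E C C' P"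
  by unfold_locales (simp_all add: gate_simple_graph clique_def)

lemma gate_at_most_two_cliques:
  assumes "gate V E" "clique V E K1" "clique V E K2" "clique V E K3" "x \<in> K1" "x \<in> K2" "x \<in> K3"
  shows "K1 = K2 \<or> K1 = K3 \<or> K2 = K3"
  using assms
proof (induction arbitrary: x K1 K2 K3 rule: gate.induct)
  case (cycle n f V E)
  obtain xs where xs: "distinct xs" "length xs = n" "set xs = V"
    "{{f i, f (Suc i mod n)} | i. i < n} = cycle_edges xs"
    by (rule cycle_edges_of_bij[OF cycle.hyps(1,2)])
  have "x \<in> set xs" using clique_subset[OF cycle.prems(1)] cycle.prems(4) xs(3) by blast
  then obtain ys where ys: "distinct (ys @ [x])" "length (ys @ [x]) = n" "set (ys @ [x]) = V"
    "cycle_edges (ys @ [x]) = E"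
    using cycle_edges_rotate_to_last[OF xs(1)] xs(2,3,4) cycle.hyps(3) by metis
  have "3 \<le> length ys" using ys(2) cycle.hyps(1) by simp
  note through_x = cycle_clique_through_last[OF ys(1) this, unfolded ys(3,4)]
  show ?case
    using through_x[OF cycle.prems(1,4)] through_x[OF cycle.prems(2,5)] through_x[OF cycle.prems(3,6)]
    by blast
next
  case (extend V E C C' P)
  interpret gate_extension V E C C' P
    using gate_extensionI extend.hyps by blast
  show ?case
    using at_most_two_cliques[OF extend.IH] extend.prems by (simp add: attach_edges_def star_def)
qed

section \<open>Replacing a vertex by a path\<close>

definition replacements_are_gates :: "'a set \<Rightarrow> 'a set set \<Rightarrow> bool" where
  "replacements_are_gates V E \<longleftrightarrow> (\<forall>v C1 C2 W. v \<in> V \<longrightarrow> clique V E C1 \<longrightarrow> clique V E C2 \<longrightarrow>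
     C1 \<inter> C2 = {v} \<longrightarrow> 2 \<le> length W \<longrightarrow> distinct W \<longrightarrow> set W \<inter> V = {} \<longrightarrow>
     gate (V - {v} \<union> set W) (replace_edges E v C1 C2 W))"

context gate_extension
begin

lemma replace_path_vertex:
  assumes i: "i < length P" and W: "2 \<le> length W" "distinct W" "set W \<inter> (V \<union> set P) = {}"
  shows "gate ((V \<union> set P) - {P ! i} \<union> set W)
    (replace_edges (attach_edges E C C' P) (P ! i)
      (insert (P ! i) (left_neighbours i)) (insert (P ! i) (right_neighbours i)) W)"
proof -
  define v xs ys where "v = P ! i" and "xs = take i P" and "ys = drop (Suc i) P"
  have P: "P = xs @ v # ys" unfolding v_def xs_def ys_def by (rule id_take_nth_drop[OF i])
  have dP: "distinct (xs @ v # ys)" "set (xs @ v # ys) \<inter> V = {}"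
    using distinct_P P_disjoint unfolding P[symmetric] .
  then have v: "v \<notin> set xs" "v \<notin> set ys" "v \<notin> V" by auto
  have edges: "\<forall>e\<in>E. v \<notin> e"
    using graph v(3) by (auto simp: simple_graph_def)
  have L: "insert v (left_neighbours i) - {v} = (if xs = [] then C else {last xs})"
    using not_self_neighbour[OF i] i by (auto simp: left_neighbours_def v_def xs_def last_conv_nth)
  have R: "insert v (right_neighbours i) - {v} = (if ys = [] then C' else {hd ys})"
    using not_self_neighbour[OF i] i by (auto simp: right_neighbours_def v_def ys_def hd_drop_conv_nth)
  have "gate (V \<union> set (xs @ W @ ys)) (attach_edges E C C' (xs @ W @ ys))"
  proof (rule gate_attach_edges[OF gate clique_C clique_C' disjoint])
    show "2 \<le> length (xs @ W @ ys)" using W(1) by simp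
    show "distinct (xs @ W @ ys)" using dP(1) W(2,3) unfolding P by auto
    show "set (xs @ W @ ys) \<inter> V = {}" using dP(2) W(3) unfolding P by auto
  qed
  moreover have "V \<union> set (xs @ W @ ys) = (V \<union> set P) - {v} \<union> set W"
    using v unfolding P by auto
  moreover have "v \<notin> C" "v \<notin> C'" "W \<noteq> []" using v(3) C_subset W(1) by auto
  then have "attach_edges (del_edges (attach_edges E C C' P) v)
      (if xs = [] then C else {last xs}) (if ys = [] then C' else {hd ys}) W
    = attach_edges E C C' (xs @ W @ ys)"
    using attach_edges_replace_middle[OF v(1,2) _ _ edges] unfolding P[symmetric] by blast
  ultimately show ?thesis by (simp add: replace_edges_def L R flip: v_def)
qed

lemma replace_vertex_off_ends:
  assumes v: "v \<in> V" "v \<notin> C" "v \<notin> C'"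
    and C12: "clique V E C1" "clique V E C2" "C1 \<inter> C2 = {v}"
    and W: "2 \<le> length W" "distinct W" "set W \<inter> (V \<union> set P) = {}"
    and replaced: "gate (V - {v} \<union> set W) (replace_edges E v C1 C2 W)"
  shows "gate ((V \<union> set P) - {v} \<union> set W) (replace_edges (attach_edges E C C' P) v C1 C2 W)"
proof -
  have WV: "set W \<inter> V = {}" using W(3) by blast
  have "gate ((V - {v} \<union> set W) \<union> set P) (attach_edges (replace_edges E v C1 C2 W) C C' P)"
  proof (rule gate_attach_edges[OF replaced _ _ disjoint length_P distinct_P])
    show "clique (V - {v} \<union> set W) (replace_edges E v C1 C2 W) C"
      "clique (V - {v} \<union> set W) (replace_edges E v C1 C2 W) C'"
      using clique_replace_edges[OF graph C12 W(1,2) WV] clique_C clique_C' v(2,3) by blast+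
    show "set P \<inter> (V - {v} \<union> set W) = {}" using P_disjoint W(3) by blast
  qed
  moreover have "v \<notin> set P" using v(1) P_disjoint by blast
  then have "replace_edges (attach_edges E C C' P) v C1 C2 W = attach_edges (replace_edges E v C1 C2 W) C C' P"
    using v(2,3) P_nonempty
    by (simp add: replace_edges_def del_edges_attach_edges attach_edges_swap Diff_triv)
  moreover have "(V - {v} \<union> set W) \<union> set P = (V \<union> set P) - {v} \<union> set W"
    using \<open>v \<notin> set P\<close> by blast
  ultimately show ?thesis by simp
qed

lemma replace_vertex_at_hd:
  assumes v: "v \<in> C" and C2: "clique V E C2" "C2 \<noteq> C" "C \<inter> C2 = {v}"
    and W: "2 \<le> length W" "distinct W" "set W \<inter> (V \<union> set P) = {}"
    and replaced: "gate (V - {v} \<union> set W) (replace_edges E v C C2 W)"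
  shows "gate ((V \<union> set P) - {v} \<union> set W)
    (replace_edges (attach_edges E C C' P) v (insert (hd P) C) C2 W)"
proof -
  have WV: "set W \<inter> V = {}" using W(3) by blast
  interpret replacement: path_attachment "V - {v}" "del_edges E v" "C - {v}" "C2 - {v}" W
    using path_attachment_replacement[OF graph clique_C C2(1,3) W(1,2) WV] .
  have v': "v \<notin> C'" "v \<notin> set P" "hd P \<noteq> v"
    using v disjoint C_subset P_disjoint hd_last_P_notin by auto
  have "hd W \<notin> C'" using replacement.hd_last_P_notin(1) v'(1) C_subset by blast
  have "C - {v} \<noteq> {}"
    using clique_maximal[OF clique_C, of C2] C2 by (auto simp: clique_def)
  then have X: "clique (V - {v} \<union> set W) (replace_edges E v C C2 W) (insert (hd W) (C - {v}))"
    unfolding replace_edges_def by (rule replacement.clique_insert_hd)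
  have "gate ((V - {v} \<union> set W) \<union> set P)
      (attach_edges (replace_edges E v C C2 W) (insert (hd W) (C - {v})) C' P)"
  proof (rule gate_attach_edges[OF replaced X _ _ length_P distinct_P])
    show "clique (V - {v} \<union> set W) (replace_edges E v C C2 W) C'"
      using clique_replace_edges[OF graph clique_C C2(1,3) W(1,2) WV clique_C' v'(1)] .
    show "insert (hd W) (C - {v}) \<inter> C' = {}" using disjoint \<open>hd W \<notin> C'\<close> by blast
    show "set P \<inter> (V - {v} \<union> set W) = {}" using P_disjoint W(3) by blast
  qed
  moreover have "insert (hd P) C - {v} = insert (hd P) (C - {v})" using v'(3) by blast
  then have "replace_edges (attach_edges E C C' P) v (insert (hd P) C) C2 W
      = attach_edges (replace_edges E v C C2 W) (insert (hd W) (C - {v})) C' P"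
    using v'(1,2) P_nonempty
    by (simp add: replace_edges_def del_edges_attach_edges attach_edges_insert_hd
        attach_edges_swap[of _ "C - {v}" C' P] Diff_triv insert_commute)
  moreover have "(V - {v} \<union> set W) \<union> set P = (V \<union> set P) - {v} \<union> set W"
    using v'(2) by blast
  ultimately show ?thesis by simp
qed

lemma cliques_through_hd_clique:
  assumes v: "v \<in> C"
    and C12: "clique (V \<union> set P) (attach_edges E C C' P) C1"
      "clique (V \<union> set P) (attach_edges E C C' P) C2" "C1 \<inter> C2 = {v}"
  shows "(C1 = insert (hd P) C \<and> clique V E C2 \<and> C2 \<noteq> C \<and> C \<inter> C2 = {v})
    \<or> (C2 = insert (hd P) C \<and> clique V E C1 \<and> C1 \<noteq> C \<and> C \<inter> C1 = {v})"
proof -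
  have vV: "v \<in> V" "v \<notin> C'" "hd P \<noteq> v" using v C_subset disjoint hd_last_P_notin by auto
  have vC: "v \<in> C1" "v \<in> C2" using C12(3) by auto
  have cases: "Cj = insert (hd P) C \<or> (clique V E Cj \<and> Cj \<noteq> C \<and> Cj \<inter> set P = {})"
    if "clique (V \<union> set P) (attach_edges E C C' P) Cj" "v \<in> Cj" for Cj
    using clique_through_graph_vertex[OF that(1) vV(1) that(2)] clique_avoiding_path[OF that(1)] vV(2)
    by blast
  have "C1 \<noteq> C2"
  proof
    assume "C1 = C2"
    then have "C1 = {v}" using C12(3) by blast
    then show False
      using cases[OF C12(1) vC(1)] clique_maximal[of V E C1 C] clique_C v vV(3)
      by (auto simp: clique_def)
  qed
  \<comment> \<open>Otherwise \<open>C1\<close>, \<open>C2\<close> and \<open>C\<close> would be three cliques of the gate \<open>(V, E)\<close> through \<open>v\<close>.\<close>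
  moreover have "\<not> (clique V E C1 \<and> clique V E C2 \<and> C1 \<noteq> C \<and> C2 \<noteq> C)"
    using gate_at_most_two_cliques[OF gate _ _ clique_C vC v] \<open>C1 \<noteq> C2\<close> by blast
  ultimately consider "C1 = insert (hd P) C" "clique V E C2" "C2 \<noteq> C" "C2 \<inter> set P = {}"
    | "C2 = insert (hd P) C" "clique V E C1" "C1 \<noteq> C" "C1 \<inter> set P = {}"
    using cases[OF C12(1) vC(1)] cases[OF C12(2) vC(2)] by blast
  then show ?thesis
  proof cases
    case 1
    have "hd P \<notin> C2" using 1(4) hd_in_set[OF P_nonempty] by blast
    then show ?thesis using C12(3) 1 by auto
  next
    case 2
    have "hd P \<notin> C1" using 2(4) hd_in_set[OF P_nonempty] by blast
    then show ?thesis using C12(3) 2 by auto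
  qed
qed

lemma replace_graph_vertex:
  assumes IH: "replacements_are_gates V E"
    and v: "v \<in> V" "v \<notin> C'"
    and C12: "clique (V \<union> set P) (attach_edges E C C' P) C1"
      "clique (V \<union> set P) (attach_edges E C C' P) C2" "C1 \<inter> C2 = {v}"
    and W: "2 \<le> length W" "distinct W" "set W \<inter> (V \<union> set P) = {}"
  shows "gate ((V \<union> set P) - {v} \<union> set W) (replace_edges (attach_edges E C C' P) v C1 C2 W)"
proof -
  have replaced: "gate (V - {v} \<union> set U) (replace_edges E v D1 D2 U)"
    if "clique V E D1" "clique V E D2" "D1 \<inter> D2 = {v}"
      "2 \<le> length U" "distinct U" "set U \<inter> (V \<union> set P) = {}" for D1 D2 U
    using IH v(1) that unfolding replacements_are_gates_def by blast
  have vC: "v \<in> C1" "v \<in> C2" using C12(3) by auto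
  show ?thesis
  proof (cases "v \<in> C")
    case False
    then have "C1 \<inter> set P = {}" "C2 \<inter> set P = {}"
      using clique_through_graph_vertex[OF C12(1) v(1) vC(1)]
        clique_through_graph_vertex[OF C12(2) v(1) vC(2)] v(2) by blast+
    then have "clique V E C1" "clique V E C2"
      using clique_avoiding_path C12(1,2) by blast+
    then show ?thesis
      using replace_vertex_off_ends[OF v(1) False v(2) _ _ C12(3) W] replaced C12(3) W by blast
  next
    case True
    have W': "2 \<le> length (rev W)" "distinct (rev W)" "set (rev W) \<inter> (V \<union> set P) = {}"
      using W by auto
    from cliques_through_hd_clique[OF True C12] show ?thesis
    proof (elim disjE conjE)
      assume C1: "C1 = insert (hd P) C" and C2: "clique V E C2" "C2 \<noteq> C" "C \<inter> C2 = {v}"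
      from replace_vertex_at_hd[OF True C2 W replaced[OF clique_C C2(1,3) W]]
      show ?thesis using C1 by simp
    next
      assume C2: "C2 = insert (hd P) C" and C1: "clique V E C1" "C1 \<noteq> C" "C \<inter> C1 = {v}"
      from replace_vertex_at_hd[OF True C1 W' replaced[OF clique_C C1(1,3) W']]
      show ?thesis using C2 by (simp add: replace_edges_rev)
    qed
  qed
qed

lemma cliques_through_path_vertex:
  assumes i: "i < length P"
    and C12: "clique (V \<union> set P) (attach_edges E C C' P) C1"
      "clique (V \<union> set P) (attach_edges E C C' P) C2" "C1 \<inter> C2 = {P ! i}"
  shows "(C1 = insert (P ! i) (left_neighbours i) \<and> C2 = insert (P ! i) (right_neighbours i))
    \<or> (C1 = insert (P ! i) (right_neighbours i) \<and> C2 = insert (P ! i) (left_neighbours i))"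
proof -
  let ?L = "insert (P ! i) (left_neighbours i)" and ?R = "insert (P ! i) (right_neighbours i)"
  have "C1 \<in> {?L, ?R}" "C2 \<in> {?L, ?R}"
    using clique_through_path_vertex[OF i] C12 by blast+
  moreover obtain u w where u: "u \<in> left_neighbours i" and w: "w \<in> right_neighbours i"
    using neighbours_nonempty by blast
  moreover have "u \<noteq> P ! i" "w \<noteq> P ! i" using u w not_self_neighbour[OF i] by auto
  moreover have "u \<notin> ?R"
    using left_right_neighbours_nonadjacent[OF i u] \<open>u \<noteq> P ! i\<close> by blast
  ultimately show ?thesis using C12(3) by blast
qed

lemma replacements_are_gates_attach:
  assumes IH: "replacements_are_gates V E"
  shows "replacements_are_gates (V \<union> set P) (attach_edges E C C' P)"
  unfolding replacements_are_gates_def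
proof (intro allI impI)
  fix v C1 C2 W
  assume v: "v \<in> V \<union> set P"
    and C12: "clique (V \<union> set P) (attach_edges E C C' P) C1"
      "clique (V \<union> set P) (attach_edges E C C' P) C2" "C1 \<inter> C2 = {v}"
    and W: "2 \<le> length W" "distinct W" "set W \<inter> (V \<union> set P) = {}"
  show "gate ((V \<union> set P) - {v} \<union> set W) (replace_edges (attach_edges E C C' P) v C1 C2 W)"
  proof (cases "v \<in> set P")
    case True
    then obtain i where i: "i < length P" "v = P ! i" by (metis in_set_conv_nth)
    from cliques_through_path_vertex[OF i(1) C12[unfolded i(2)]] show ?thesis
    proof (elim disjE conjE)
      assume "C1 = insert (P ! i) (left_neighbours i)" "C2 = insert (P ! i) (right_neighbours i)"
      then show ?thesis using replace_path_vertex[OF i(1) W] i(2) by simp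
    next
      assume "C1 = insert (P ! i) (right_neighbours i)" "C2 = insert (P ! i) (left_neighbours i)"
      then show ?thesis
        using replace_path_vertex[OF i(1), of "rev W"] W i(2) by (simp add: replace_edges_rev)
    qed
  next
    case False
    then have vV: "v \<in> V" using v by blast
    show ?thesis
    proof (cases "v \<in> C'")
      case False
      from replace_graph_vertex[OF IH vV False C12 W] show ?thesis .
    next
      case True
      then have "v \<notin> C" using disjoint by blast
      from gate_extension.replace_graph_vertex[OF reversed IH vV this] C12 W show ?thesis
        by (simp add: attach_edges_rev)
    qed
  qed
qed

end

lemma replace_edges_cycle:
  assumes "distinct (ys @ [v])" "ys \<noteq> []" "W \<noteq> []"
  shows "replace_edges (cycle_edges (ys @ [v])) v {last ys, v} {v, hd ys} W = cycle_edges (ys @ W)"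
proof -
  have v: "v \<notin> set ys" "hd ys \<noteq> v" "last ys \<noteq> v" using assms by auto
  then have "del_edges (cycle_edges (ys @ [v])) v = path_edges ys"
    using assms(2) by (auto simp: cycle_edges_snoc del_edges_def dest: path_edges_subset)
  moreover have "{last ys, v} - {v} = {last ys}" "{v, hd ys} - {v} = {hd ys}" using v by auto
  ultimately show ?thesis
    using assms(2,3)
    by (simp add: replace_edges_def attach_edges_def cycle_edges_def path_edges_append
        insert_commute Un_ac)
qed

lemma replacements_are_gates_cycle:
  assumes "distinct xs" "4 \<le> length xs"
  shows "replacements_are_gates (set xs) (cycle_edges xs)"
  unfolding replacements_are_gates_def
proof (intro allI impI)
  fix v C1 C2 W
  assume v: "v \<in> set xs"
    and C12: "clique (set xs) (cycle_edges xs) C1" "clique (set xs) (cycle_edges xs) C2" "C1 \<inter> C2 = {v}"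
    and W: "2 \<le> length W" "distinct W" "set W \<inter> set xs = {}"
  obtain ys where ys: "distinct (ys @ [v])" "length (ys @ [v]) = length xs" "set (ys @ [v]) = set xs"
    "cycle_edges (ys @ [v]) = cycle_edges xs"
    by (rule cycle_edges_rotate_to_last[OF assms(1) v])
  have ys3: "3 \<le> length ys" using ys(2) assms(2) by simp
  note through_v = cycle_clique_through_last[OF ys(1) ys3, unfolded ys(3,4)]
  have "ys \<noteq> []" using ys3 by auto
  then have ends: "ys \<noteq> []" "last ys \<noteq> v" "hd ys \<noteq> v"
    using ys(1) last_in_set hd_in_set by fastforce+
  have Wne: "W \<noteq> []" "rev W \<noteq> []" using W(1) by auto
  have "C1 \<noteq> C2" using C12(3) through_v[OF C12(1)] ends by auto
  then consider "C1 = {last ys, v}" "C2 = {v, hd ys}" | "C1 = {v, hd ys}" "C2 = {last ys, v}"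
    using through_v[OF C12(1)] through_v[OF C12(2)] C12(3) by blast
  then show "gate (set xs - {v} \<union> set W) (replace_edges (cycle_edges xs) v C1 C2 W)"
  proof cases
    case 1
    have "gate (set (ys @ W)) (cycle_edges (ys @ W))"
      using ys(1,3) ys3 W by (intro gate_cycle_edges) auto
    moreover have "set (ys @ W) = set xs - {v} \<union> set W" using ys(1,3) by auto
    moreover have "cycle_edges (ys @ W) = replace_edges (cycle_edges xs) v C1 C2 W"
      using replace_edges_cycle[OF ys(1) ends(1) Wne(1)] 1 ys(4) by simp
    ultimately show ?thesis by simp
  next
    case 2
    have "gate (set (ys @ rev W)) (cycle_edges (ys @ rev W))"
      using ys(1,3) ys3 W by (intro gate_cycle_edges) auto
    moreover have "set (ys @ rev W) = set xs - {v} \<union> set W" using ys(1,3) by auto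
    moreover have "cycle_edges (ys @ rev W) = replace_edges (cycle_edges xs) v C1 C2 W"
      using replace_edges_cycle[OF ys(1) ends(1) Wne(2)] 2 ys(4) by (simp add: replace_edges_rev)
    ultimately show ?thesis by simp
  qed
qed

lemma gate_replacements_are_gates: "gate V E \<Longrightarrow> replacements_are_gates V E"
proof (induction rule: gate.induct)
  case (cycle n f V E)
  obtain xs where "distinct xs" "length xs = n" "set xs = V"
    "{{f i, f (Suc i mod n)} | i. i < n} = cycle_edges xs"
    by (rule cycle_edges_of_bij[OF cycle.hyps(1,2)])
  then show ?case using replacements_are_gates_cycle cycle.hyps(1,3) by auto
next
  case (extend V E C C' P)
  interpret gate_extension V E C C' P
    using gate_extensionI extend.hyps by blast
  show ?case
    using replacements_are_gates_attach[OF extend.IH] by (simp add: attach_edges_def star_def)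
qed

theorem lemma6:
  fixes V :: "'a set" and E :: "'a set set" and v :: 'a and C1 C2 :: "'a set"
    and W :: "'a list"
  assumes "gate V E"
    and "v \<in> V"
    and "clique V E C1" and "clique V E C2"
    and "C1 \<inter> C2 = {v}"
    and "length W \<ge> 2" and "distinct W" and "set W \<inter> V = {}"
  shows "gate ((V - {v}) \<union> set W)
              (del_edges E v \<union> path_edges W
                \<union> {{hd W, c} | c. c \<in> C1 - {v}} \<union> {{last W, c} | c. c \<in> C2 - {v}})"
  using gate_replacements_are_gates[OF assms(1)] assms(2-8)
  unfolding replacements_are_gates_def replace_edges_def attach_edges_def star_def by blast

end
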